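(* Let $n_1,n_2,n_3$ be distinct primes and let $k>1$ be an integer with $\gcd(k,n_i)=1$ for $i=1,2,3$, and suppose $n=n_1n_2n_3$ is a pseudoprime of basis $k$. Then for all $m,j\in\mathbb{N}$, $$\frac{k^{\,j\,|n_2n_3-n_1^{m}|}-1}{n_1}\in\mathbb{N},\qquad \frac{k^{\,j\,|n_1n_2-n_3^{m}|}-1}{n_3}\in\mathbb{N},\qquad \frac{k^{\,j\,|n_1n_3-n_2^{m}|}-1}{n_2}\in\mathbb{N}.$$
   Context: A positive integer $n$ is called a pseudoprime of basis $k$ (where $k>1$ is an integer) if $n$ is an odd composite number, $\gcd(n,k)=1$, and $k^{n-1}\equiv 1 \pmod n$. $\mathbb{N}$ denotes the positive integers. *)

theory Defs
  imports "HOL-Number_Theory.Number_Theory"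
begin

definition pseudoprime :: "nat \<Rightarrow> nat \<Rightarrow> bool" where
  "pseudoprime n k \<longleftrightarrow> k > 1 \<and> odd n \<and> n > 1 \<and> \<not> prime n \<and> coprime n k \<and> [k ^ (n - 1) = 1] (mod n)"

text \<open>x is a positive integer (the paper's \<nat>).\<close>
definition pos_nat :: "real \<Rightarrow> bool" where
  "pos_nat x \<longleftrightarrow> x \<in> \<nat> \<and> x > 0"

end

theory Submission
  imports Defs
begin

(* Write n = p * a with p one of the three primes. The order d of k modulo p divides p - 1
   (Fermat) and p * a - 1 (pseudoprimality), so p and a are both 1 modulo d; hence d divides
   a - p^m and k^(j |a - p^m|) = 1 (mod p). The exponent is nonzero because p does not
   divide a, so the quotient is a positive integer. *)

lemma cong_power_if_dvd_pred:
  fixes d p a m :: nat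
  assumes "p \<ge> 1" and "a \<ge> 1" and "d dvd p - 1" and "d dvd p * a - 1"
  shows "[a = p ^ m] (mod d)"
proof -
  have p_one: "[p = 1] (mod d)"
    using assms(1,3) by (simp add: cong_altdef_nat)
  have pa_one: "[p * a = 1] (mod d)"
    using assms by (simp add: cong_altdef_nat)
  have "[p * a = 1 * a] (mod d)"
    using p_one by (rule cong_mult) simp
  then have "[a = 1] (mod d)"
    using pa_one by (metis cong_sym cong_trans mult_1)
  moreover have "[p ^ m = 1] (mod d)"
    using cong_pow[OF p_one] by simp
  ultimately show ?thesis
    by (metis cong_sym cong_trans)
qed

lemma cong_power_abs_diff_one:
  fixes p a k m j :: nat
  assumes "prime p" and "coprime k p" and "a \<ge> 1"
    and "[k ^ (p * a - 1) = 1] (mod p)"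
  shows "[k ^ (j * nat \<bar>int a - int (p ^ m)\<bar>) = 1] (mod p)"
proof -
  have "\<not> p dvd k"
    using assms(1,2) coprime_common_divisor[of k p p] by (auto simp: not_prime_unit)
  then have "ord p k dvd p - 1"
    using fermat_theorem[OF assms(1)] ord_divides by blast
  moreover have "ord p k dvd p * a - 1"
    using assms(4) ord_divides by blast
  ultimately have "[a = p ^ m] (mod ord p k)"
    using assms(1,3) prime_ge_1_nat cong_power_if_dvd_pred by blast
  then have "int (ord p k) dvd int (nat \<bar>int a - int (p ^ m)\<bar>)"
    by (simp add: cong_int_iff[symmetric] cong_iff_dvd_diff)
  then have "ord p k dvd j * nat \<bar>int a - int (p ^ m)\<bar>"
    by (simp only: int_dvd_int_iff) simp
  then show ?thesis
    using ord_divides by blast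
qed

lemma pos_nat_pred_div:
  fixes x p :: nat
  assumes "p > 0" and "x > 1" and "p dvd x - 1"
  shows "pos_nat ((real x - 1) / real p)"
proof -
  obtain q where q: "x - 1 = p * q"
    using assms(3) by blast
  with assms(2) have "q > 0"
    by (cases q) auto
  moreover have "real x - 1 = real p * real q"
    using assms(2) q by (metis of_nat_1 of_nat_diff of_nat_mult less_imp_le)
  then have "(real x - 1) / real p = real q"
    using assms(1) by simp
  ultimately show ?thesis
    unfolding pos_nat_def by simp
qed

lemma pos_nat_power_abs_diff_div:
  fixes p a k m j :: nat
  assumes "prime p" and "coprime k p" and "k > 1" and "\<not> p dvd a"
    and "m \<ge> 1" and "j \<ge> 1"
    and "[k ^ (p * a - 1) = 1] (mod p)"
  shows "pos_nat ((real k ^ (j * nat \<bar>int a - int (p ^ m)\<bar>) - 1) / real p)"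
proof -
  define e where "e = j * nat \<bar>int a - int (p ^ m)\<bar>"
  have "a \<ge> 1"
    using assms(4) by (cases a) auto
  have "p dvd p ^ m"
    using assms(5) by simp
  then have "a \<noteq> p ^ m"
    using assms(4) by auto
  then have "e > 0"
    using assms(6) unfolding e_def by auto
  then have "k ^ e > 1"
    using assms(3) one_less_power by blast
  moreover have "p dvd k ^ e - 1"
    unfolding e_def
    using cong_power_abs_diff_one[OF assms(1,2) \<open>a \<ge> 1\<close> assms(7)] cong_to_1_nat by blast
  ultimately have "pos_nat ((real (k ^ e) - 1) / real p)"
    using assms(1) prime_gt_0_nat pos_nat_pred_div by blast
  then show ?thesis
    unfolding e_def by simp
qed

lemma pseudoprime_cong_mod_factor:
  assumes "pseudoprime (p * a) k"
  shows "[k ^ (p * a - 1) = 1] (mod p)"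
  using assms unfolding pseudoprime_def by (metis cong_dvd_modulus_nat dvd_triv_left)

lemma prime_not_dvd_mult_primes:
  fixes p q r :: nat
  assumes "prime p" "prime q" "prime r" "p \<noteq> q" "p \<noteq> r"
  shows "\<not> p dvd q * r"
  using assms by (metis prime_dvd_mult_iff primes_dvd_imp_eq)

theorem mainTheorem4:
  fixes n1 n2 n3 k :: nat
  assumes "prime n1" and "prime n2" and "prime n3"
    and "n1 \<noteq> n2" and "n1 \<noteq> n3" and "n2 \<noteq> n3"
    and "k > 1"
    and "coprime k n1" and "coprime k n2" and "coprime k n3"
    and "pseudoprime (n1 * n2 * n3) k"
  shows "\<forall>m j :: nat. m \<ge> 1 \<longrightarrow> j \<ge> 1 \<longrightarrow>
      pos_nat ((real k ^ (j * nat \<bar>int (n2 * n3) - int (n1 ^ m)\<bar>) - 1) / real n1) \<and>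
      pos_nat ((real k ^ (j * nat \<bar>int (n1 * n2) - int (n3 ^ m)\<bar>) - 1) / real n3) \<and>
      pos_nat ((real k ^ (j * nat \<bar>int (n1 * n3) - int (n2 ^ m)\<bar>) - 1) / real n2)"
proof -
  have "pseudoprime (n1 * (n2 * n3)) k" "pseudoprime (n3 * (n1 * n2)) k"
    "pseudoprime (n2 * (n1 * n3)) k"
    using assms(11) by (simp_all add: ac_simps)
  note cong = this[THEN pseudoprime_cong_mod_factor]
  have "\<not> n1 dvd n2 * n3" "\<not> n3 dvd n1 * n2" "\<not> n2 dvd n1 * n3"
    using assms(1-6) prime_not_dvd_mult_primes by metis+
  with cong assms(1-3,7-10) show ?thesis
    by (blast intro: pos_nat_power_abs_diff_div)
qed

end
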